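(* If $G$ is a connected cubic (3-regular) graph of order $n$ with $G \not\cong K_{3,3}$, then $\gamma_{\rm gr}^t(G) \ge \frac{1}{2}n$.
   Context: $N(v)$ denotes the open neighborhood of $v$. A sequence $S=(v_1,\ldots,v_k)$ of distinct vertices of a graph $G$ without isolated vertices is a legal sequence if $N(v_i)\setminus \bigcup_{j=1}^{i-1} N(v_j)\neq\emptyset$ for every $i\in\{2,\ldots,k\}$, and a total dominating sequence if moreover $\{v_1,\ldots,v_k\}$ is a total dominating set of $G$. $\gamma_{\rm gr}^t(G)$ is the maximum length of a total dominating sequence of $G$. *)

theory Defs
  imports Main
begin

definition simple_graph :: "'a set \<Rightarrow> ('a \<Rightarrow> 'a \<Rightarrow> bool) \<Rightarrow> bool" where
  "simple_graph V E \<longleftrightarrow> finite V \<and> (\<forall>x y. E x y \<longrightarrow> x \<in> V \<and> y \<in> V)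
     \<and> (\<forall>x y. E x y \<longrightarrow> E y x) \<and> (\<forall>x. \<not> E x x)"

definition nbhd :: "'a set \<Rightarrow> ('a \<Rightarrow> 'a \<Rightarrow> bool) \<Rightarrow> 'a \<Rightarrow> 'a set" where
  "nbhd V E v = {u \<in> V. E v u}"

definition cubic :: "'a set \<Rightarrow> ('a \<Rightarrow> 'a \<Rightarrow> bool) \<Rightarrow> bool" where
  "cubic V E \<longleftrightarrow> (\<forall>v \<in> V. card (nbhd V E v) = 3)"

definition connected_graph :: "'a set \<Rightarrow> ('a \<Rightarrow> 'a \<Rightarrow> bool) \<Rightarrow> bool" where
  "connected_graph V E \<longleftrightarrow> V \<noteq> {} \<and> (\<forall>x \<in> V. \<forall>y \<in> V. E\<^sup>*\<^sup>* x y)"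

definition graph_iso :: "'a set \<Rightarrow> ('a \<Rightarrow> 'a \<Rightarrow> bool) \<Rightarrow> 'b set \<Rightarrow> ('b \<Rightarrow> 'b \<Rightarrow> bool) \<Rightarrow> bool" where
  "graph_iso V E W F \<longleftrightarrow> (\<exists>f. bij_betw f V W \<and> (\<forall>x \<in> V. \<forall>y \<in> V. E x y \<longleftrightarrow> F (f x) (f y)))"

definition K33_V :: "(bool \<times> nat) set" where
  "K33_V = UNIV \<times> {0..<3}"

definition K33_E :: "bool \<times> nat \<Rightarrow> bool \<times> nat \<Rightarrow> bool" where
  "K33_E x y \<longleftrightarrow> x \<in> K33_V \<and> y \<in> K33_V \<and> fst x \<noteq> fst y"

definition legal_seq :: "'a set \<Rightarrow> ('a \<Rightarrow> 'a \<Rightarrow> bool) \<Rightarrow> 'a list \<Rightarrow> bool" where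
  "legal_seq V E S \<longleftrightarrow> distinct S \<and> set S \<subseteq> V \<and>
     (\<forall>i. 1 \<le> i \<and> i < length S \<longrightarrow>
        nbhd V E (S ! i) - (\<Union>j<i. nbhd V E (S ! j)) \<noteq> {})"

definition total_dominating_set :: "'a set \<Rightarrow> ('a \<Rightarrow> 'a \<Rightarrow> bool) \<Rightarrow> 'a set \<Rightarrow> bool" where
  "total_dominating_set V E D \<longleftrightarrow> D \<subseteq> V \<and> (\<forall>v \<in> V. \<exists>u \<in> D. E v u)"

definition total_dom_seq :: "'a set \<Rightarrow> ('a \<Rightarrow> 'a \<Rightarrow> bool) \<Rightarrow> 'a list \<Rightarrow> bool" where
  "total_dom_seq V E S \<longleftrightarrow> legal_seq V E S \<and> total_dominating_set V E (set S)"

definition gamma_gr_t :: "'a set \<Rightarrow> ('a \<Rightarrow> 'a \<Rightarrow> bool) \<Rightarrow> nat" where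
  "gamma_gr_t V E = Max (length ` {S. total_dom_seq V E S})"

end

theory Submission
  imports Defs
begin

text \<open>
  A vertex v may be appended to a legal sequence S as soon as some neighbourhood N(w) containing v
  is disjoint from S, since then w is dominated for the first time. A set C is used up by
  repeatedly choosing a neighbourhood that meets both C and the rest of a set U whose vertices are
  linked through common neighbours: it contains at most two vertices of C, and these are paid for
  by appending one of them. This gives |C|/2 vertices for every proper part C of U. The last
  missing vertex comes from twin structure: without twins (equal neighbourhoods) in U, the final
  two vertices of C can both be appended; twins x, y with common neighbours a, b such that
  N(a) \<noteq> N(b) allow covering N(a) and one more vertex of N(b) with two vertices; and if all
  neighbours of x are twins, the graph is K_{3,3}. A connected cubic graph is either linked
  through common neighbours as a whole, or bipartite, and then its two sides are treated in turn.
\<close>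

lemma graph_iso_K33I:
  assumes V: "V = X \<union> Y" "X \<inter> Y = {}" and card: "card X = 3" "card Y = 3"
    and edges: "\<And>u v. u \<in> V \<Longrightarrow> v \<in> V \<Longrightarrow> E u v \<longleftrightarrow> (u \<in> X \<longleftrightarrow> v \<in> Y)"
  shows "graph_iso V E K33_V K33_E"
proof -
  have "finite X" "finite Y" using card by (simp_all add: card_ge_0_finite)
  then obtain gX gY where gX: "bij_betw gX X {0..<3::nat}" and gY: "bij_betw gY Y {0..<3::nat}"
    using card finite_same_card_bij by (metis card_atLeastLessThan diff_zero finite_atLeastLessThan)
  have Pair: "bij_betw (Pair b) {0..<3::nat} ({b} \<times> {0..<3})" for b
    by (auto simp: bij_betw_def inj_on_def)
  define f where "f v = (if v \<in> X then (True, gX v) else (False, gY v))" for v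
  have "bij_betw f (X \<union> Y) ({True} \<times> {0..<3} \<union> {False} \<times> {0..<3})"
    unfolding f_def
    using bij_betw_disjoint_Un[OF bij_betw_trans[OF gX Pair[of True]]
        bij_betw_trans[OF gY Pair[of False]], unfolded comp_def] V(2)
    by (simp add: Times_Int_Times)
  moreover have "{True} \<times> {0..<3} \<union> {False} \<times> {0..<3} = K33_V"
    unfolding K33_V_def by auto
  ultimately have bij: "bij_betw f V K33_V" using V(1) by simp
  have "E u v \<longleftrightarrow> K33_E (f u) (f v)" if "u \<in> V" "v \<in> V" for u v
    using edges[OF that] that bij_betw_apply[OF bij] V unfolding K33_E_def f_def by auto
  with bij show ?thesis unfolding graph_iso_def by blast
qed

locale sgraph =
  fixes V :: "'a set" and E :: "'a \<Rightarrow> 'a \<Rightarrow> bool"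
  assumes simple: "simple_graph V E"
begin

abbreviation N :: "'a \<Rightarrow> 'a set" where "N \<equiv> nbhd V E"

lemma finite_V: "finite V"
  using simple by (simp add: simple_graph_def)

lemma edge_sym: "E x y \<Longrightarrow> E y x"
  using simple by (simp add: simple_graph_def)

lemma edge_in_V: "E x y \<Longrightarrow> x \<in> V \<and> y \<in> V"
  using simple by (simp add: simple_graph_def)

lemma no_loop: "\<not> E x x"
  using simple by (simp add: simple_graph_def)

lemma nbhd_subset: "N w \<subseteq> V"
  by (auto simp: nbhd_def)

lemma finite_nbhd: "finite (N w)"
  using finite_V nbhd_subset by (rule finite_subset[rotated])

lemma in_nbhd_iff: "u \<in> N w \<longleftrightarrow> E w u"
  using edge_in_V by (auto simp: nbhd_def)

lemma in_nbhd_sym: "u \<in> N w \<longleftrightarrow> w \<in> N u"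
  using edge_sym by (auto simp: in_nbhd_iff)

lemma in_V_if_nbhd_nonempty: "N w \<noteq> {} \<Longrightarrow> w \<in> V"
  using edge_in_V by (auto simp: in_nbhd_iff)

lemma legal_seq_snoc:
  assumes S: "legal_seq V E S" and v: "v \<in> N w" and fresh: "N w \<inter> set S = {}"
  shows "legal_seq V E (S @ [v])"
  unfolding legal_seq_def
proof (intro conjI allI impI)
  show "distinct (S @ [v])" "set (S @ [v]) \<subseteq> V"
    using S v fresh nbhd_subset by (auto simp: legal_seq_def)
  fix i assume i: "1 \<le> i \<and> i < length (S @ [v])"
  show "N ((S @ [v]) ! i) - (\<Union>j<i. N ((S @ [v]) ! j)) \<noteq> {}"
  proof (cases "i < length S")
    case True
    then have "(\<Union>j<i. N ((S @ [v]) ! j)) = (\<Union>j<i. N (S ! j))"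
      by (auto simp: nth_append)
    with S i True show ?thesis by (simp add: legal_seq_def nth_append)
  next
    case False
    with i have "i = length S" by simp
    moreover have "w \<notin> N (S ! j)" if "j < length S" for j
      using fresh that nth_mem in_nbhd_sym by blast
    ultimately have "w \<in> N ((S @ [v]) ! i) - (\<Union>j<i. N ((S @ [v]) ! j))"
      using v in_nbhd_sym by (auto simp: nth_append)
    then show ?thesis by blast
  qed
qed

lemma length_legal_seq_le: "legal_seq V E S \<Longrightarrow> length S \<le> card V"
  unfolding legal_seq_def using finite_V by (metis card_mono distinct_card)

lemma legal_seq_extends_to_total_dom_seq:
  assumes "legal_seq V E S" and no_isolated: "\<And>v. v \<in> V \<Longrightarrow> N v \<noteq> {}"
  shows "\<exists>T. total_dom_seq V E T \<and> length S \<le> length T"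
  using assms(1)
proof (induction "card V - length S" arbitrary: S rule: less_induct)
  case less
  show ?case
  proof (cases "total_dominating_set V E (set S)")
    case True
    with less.prems show ?thesis by (auto simp: total_dom_seq_def)
  next
    case False
    then obtain v where v: "v \<in> V" "\<forall>x \<in> set S. \<not> E v x"
      using less.prems by (auto simp: total_dominating_set_def legal_seq_def)
    then have fresh: "N v \<inter> set S = {}" by (auto simp: in_nbhd_iff)
    obtain u where "u \<in> N v" using no_isolated[OF v(1)] by blast
    then have S': "legal_seq V E (S @ [u])" using legal_seq_snoc less.prems fresh by blast
    with length_legal_seq_le have "card V - length (S @ [u]) < card V - length S"
      by (metis Suc_le_eq diff_less_mono2 length_append_singleton lessI)
    from less.hyps[OF this S'] show ?thesis by auto
  qed
qed

lemma legal_seq_length_le_gamma_gr_t: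
  assumes "legal_seq V E S" and "\<And>v. v \<in> V \<Longrightarrow> N v \<noteq> {}"
  shows "length S \<le> gamma_gr_t V E"
proof -
  obtain T where T: "total_dom_seq V E T" "length S \<le> length T"
    using legal_seq_extends_to_total_dom_seq assms by blast
  have "length ` {T. total_dom_seq V E T} \<subseteq> {..card V}"
    using length_legal_seq_le by (auto simp: total_dom_seq_def)
  then have "finite (length ` {T. total_dom_seq V E T})"
    using finite_subset by blast
  with T show ?thesis unfolding gamma_gr_t_def by (meson Max_ge image_eqI le_trans mem_Collect_eq)
qed

lemma connected_closed_eq:
  assumes "connected_graph V E" "W \<subseteq> V" "W \<noteq> {}"
    and closed: "\<And>u v. u \<in> W \<Longrightarrow> E u v \<Longrightarrow> v \<in> W"
  shows "W = V"
proof -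
  obtain w where w: "w \<in> W" using assms(3) by blast
  have "v \<in> W" if "E\<^sup>*\<^sup>* w v" for v
    using that by (induction rule: rtranclp_induct) (use w closed in blast)+
  with assms(1,2) w show ?thesis unfolding connected_graph_def by blast
qed

definition nbhd_closed :: "'a set \<Rightarrow> bool" where
  "nbhd_closed U \<longleftrightarrow> (\<forall>w. N w \<inter> U \<noteq> {} \<longrightarrow> N w \<subseteq> U)"

definition nbhd_connected :: "'a set \<Rightarrow> bool" where
  "nbhd_connected U \<longleftrightarrow>
     (\<forall>C \<subseteq> U. C \<noteq> {} \<longrightarrow> C \<noteq> U \<longrightarrow> (\<exists>w. N w \<inter> C \<noteq> {} \<and> N w \<inter> (U - C) \<noteq> {}))"

definition twin_free :: "'a set \<Rightarrow> bool" where
  "twin_free U \<longleftrightarrow> (\<forall>x \<in> U. \<forall>y \<in> U. x \<noteq> y \<longrightarrow> N x \<noteq> N y)"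

text \<open>Every neighbourhood meeting U can still be used to append a vertex of U after S.\<close>

definition fresh_nbhds :: "'a set \<Rightarrow> 'a list \<Rightarrow> bool" where
  "fresh_nbhds U S \<longleftrightarrow> (\<forall>w. N w \<inter> U \<noteq> {} \<longrightarrow> N w \<inter> set S = {})"

text \<open>Some legal sequence inside S0 \<union> C is longer than S0 by at least k/2: every appended
  vertex pays for two vertices of C.\<close>

definition extendable :: "'a list \<Rightarrow> 'a set \<Rightarrow> nat \<Rightarrow> bool" where
  "extendable S0 C k \<longleftrightarrow>
     (\<exists>S. legal_seq V E S \<and> set S \<subseteq> set S0 \<union> C \<and> 2 * length S0 + k \<le> 2 * length S)"

lemma extendable_self: "legal_seq V E S0 \<Longrightarrow> extendable S0 C 0"
  unfolding extendable_def by (intro exI[of _ S0]) simp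

lemma extendable_mono:
  assumes "extendable S0 C k" "C \<subseteq> D" "j \<le> k"
  shows "extendable S0 D j"
proof -
  obtain S where "legal_seq V E S" "set S \<subseteq> set S0 \<union> C" "2 * length S0 + k \<le> 2 * length S"
    using assms(1) unfolding extendable_def by blast
  with assms(2,3) show ?thesis unfolding extendable_def by (intro exI[of _ S]) auto
qed

lemma extendable_snoc:
  assumes "extendable S0 C k" "fresh_nbhds U S0" "v \<in> U" "v \<in> N w" "N w \<inter> C = {}"
  shows "extendable S0 (insert v C) (k + 2)"
proof -
  obtain S where S: "legal_seq V E S" "set S \<subseteq> set S0 \<union> C" "2 * length S0 + k \<le> 2 * length S"
    using assms(1) unfolding extendable_def by blast
  have "N w \<inter> set S = {}"
    using assms(2-5) S(2) unfolding fresh_nbhds_def by blast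
  with S assms(4) show ?thesis
    unfolding extendable_def by (intro exI[of _ "S @ [v]"]) (auto intro: legal_seq_snoc)
qed

definition bipartition_side :: "'a set \<Rightarrow> bool" where
  "bipartition_side C \<longleftrightarrow> C \<subseteq> V \<and> (\<forall>x y. E x y \<longrightarrow> (x \<in> C \<longleftrightarrow> y \<notin> C))"

lemma bipartition_side_Diff: "bipartition_side C \<Longrightarrow> bipartition_side (V - C)"
  unfolding bipartition_side_def using edge_in_V by blast

lemma nbhd_closed_if_bipartition_side: "bipartition_side C \<Longrightarrow> nbhd_closed C"
  unfolding bipartition_side_def nbhd_closed_def by (auto simp: in_nbhd_iff) blast

lemma nbhd_connected_if_bipartition_side:
  assumes conn: "connected_graph V E" and side: "bipartition_side C"
  shows "nbhd_connected C"
  unfolding nbhd_connected_def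
proof (intro allI impI)
  fix C' assume C': "C' \<subseteq> C" "C' \<noteq> {}" "C' \<noteq> C"
  have CV: "C \<subseteq> V" and cross: "\<And>x y. E x y \<Longrightarrow> x \<in> C \<longleftrightarrow> y \<notin> C"
    using side unfolding bipartition_side_def by auto
  show "\<exists>w. N w \<inter> C' \<noteq> {} \<and> N w \<inter> (C - C') \<noteq> {}"
  proof (rule ccontr)
    assume split: "\<not> ?thesis"
    have "C' \<union> (\<Union>c \<in> C'. N c) = V"
    proof (rule connected_closed_eq[OF conn])
      show "C' \<union> (\<Union>c \<in> C'. N c) \<subseteq> V" "C' \<union> (\<Union>c \<in> C'. N c) \<noteq> {}"
        using C' CV nbhd_subset by auto
      fix u v assume u: "u \<in> C' \<union> (\<Union>c \<in> C'. N c)" and uv: "E u v"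
      show "v \<in> C' \<union> (\<Union>c \<in> C'. N c)"
      proof (cases "u \<in> C'")
        case True
        then have "v \<in> N u" using uv by (simp add: in_nbhd_iff)
        with True show ?thesis by blast
      next
        case False
        then obtain c where c: "c \<in> C'" "u \<in> N c" using u by blast
        then have "v \<in> C" using cross[OF uv] cross[of c u] C'(1) by (auto simp: in_nbhd_iff)
        moreover have "c \<in> N u" "v \<in> N u" using c(2) uv in_nbhd_sym in_nbhd_iff by blast+
        ultimately show ?thesis using split c(1) by blast
      qed
    qed
    moreover obtain t where "t \<in> C" "t \<notin> C'" using C' by blast
    ultimately obtain c where "c \<in> C'" "E c t" using CV by (auto simp: in_nbhd_iff)
    with \<open>t \<in> C\<close> C'(1) cross show False by blast
  qed
qed

lemma bipartite_if_not_nbhd_connected: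
  assumes conn: "connected_graph V E" and "\<not> nbhd_connected V"
  shows "\<exists>C. bipartition_side C \<and> C \<noteq> {} \<and> C \<noteq> V"
proof -
  obtain C where C: "C \<subseteq> V" "C \<noteq> {}" "C \<noteq> V"
    and one_side: "\<And>w. N w \<inter> C = {} \<or> N w \<inter> (V - C) = {}"
    using assms(2) unfolding nbhd_connected_def by blast
  have side_of_nbr: "u \<in> C \<longleftrightarrow> N w \<subseteq> C" if "E w u" for w u
    using one_side[of w] nbhd_subset[of w] that by (auto simp: in_nbhd_iff)
  define agrees where "agrees u \<longleftrightarrow> (u \<in> C \<longleftrightarrow> N u \<subseteq> C)" for u
  have agrees_edge: "agrees u \<longleftrightarrow> agrees v" if "E u v" for u v
    using side_of_nbr[OF that] side_of_nbr[OF edge_sym[OF that]] unfolding agrees_def by blast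
  show ?thesis
  proof (cases "\<exists>u \<in> V. agrees u")
    case True
    have "{u \<in> V. agrees u} = V"
      by (rule connected_closed_eq[OF conn]) (use True agrees_edge edge_in_V in auto)
    then have "N u \<subseteq> C" if "u \<in> C" for u
      using that C(1) unfolding agrees_def by blast
    then have "C = V"
      using connected_closed_eq[OF conn C(1,2)] in_nbhd_iff by blast
    with C(3) show ?thesis by blast
  next
    case False
    have "x \<in> C \<longleftrightarrow> y \<notin> C" if "E x y" for x y
    proof -
      have "\<not> agrees y" using False edge_in_V[OF that] by blast
      then show ?thesis using side_of_nbr[OF edge_sym[OF that]] unfolding agrees_def by blast
    qed
    with C show ?thesis unfolding bipartition_side_def by blast
  qed
qed

end

locale cubic_graph = sgraph +
  assumes cubic: "cubic V E"
begin

lemma card_nbhd: "w \<in> V \<Longrightarrow> card (N w) = 3"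
  using cubic by (simp add: cubic_def)

lemma nbhd_subset_imp_eq: "x \<in> V \<Longrightarrow> y \<in> V \<Longrightarrow> N x \<subseteq> N y \<Longrightarrow> N x = N y"
  using card_subset_eq[OF finite_nbhd] card_nbhd by metis

lemma nbhd_nonempty: "v \<in> V \<Longrightarrow> N v \<noteq> {}"
  using card_nbhd by fastforce

lemma exists_private_nbr: "x \<in> V \<Longrightarrow> y \<in> V \<Longrightarrow> N x \<noteq> N y \<Longrightarrow> \<exists>z \<in> N x. z \<notin> N y"
  using nbhd_subset_imp_eq by blast

lemma nbhd_eq_if_adjacent_to_nbhd:
  assumes "x \<in> V" "z \<in> V" "\<And>b. b \<in> N x \<Longrightarrow> z \<in> N b"
  shows "N z = N x"
proof -
  have "N x \<subseteq> N z" using assms(3) in_nbhd_sym by blast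
  with assms(1,2) show ?thesis using nbhd_subset_imp_eq by metis
qed

lemma graph_iso_K33_if_nbrs_twins:
  assumes conn: "connected_graph V E" and a: "a \<in> N x"
    and twins: "\<And>b. b \<in> N x \<Longrightarrow> N b = N a"
  shows "graph_iso V E K33_V K33_E"
proof -
  have x: "x \<in> V" using a in_V_if_nbhd_nonempty by blast
  have "a \<in> V" using a nbhd_subset by blast
  have nbhd_of_nbr_a: "N z = N x" if "z \<in> N a" for z
    using nbhd_eq_if_adjacent_to_nbhd[OF x] that twins nbhd_subset by blast
  have disj: "N a \<inter> N x = {}"
  proof (intro equalityI subsetI)
    fix z assume "z \<in> N a \<inter> N x"
    then have "z \<in> N z" using nbhd_of_nbr_a by blast
    then show "z \<in> {}" using in_nbhd_iff no_loop by blast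
  qed simp
  have V: "V = N a \<union> N x"
  proof (rule sym, rule connected_closed_eq[OF conn])
    show "N a \<union> N x \<subseteq> V" "N a \<union> N x \<noteq> {}" using nbhd_subset a by auto
    show "v \<in> N a \<union> N x" if "u \<in> N a \<union> N x" "E u v" for u v
      using that nbhd_of_nbr_a twins in_nbhd_iff by blast
  qed
  have "E u v \<longleftrightarrow> (u \<in> N a \<longleftrightarrow> v \<in> N x)" if "u \<in> V" "v \<in> V" for u v
  proof -
    have "E u v \<longleftrightarrow> v \<in> N u" by (simp add: in_nbhd_iff)
    also have "\<dots> \<longleftrightarrow> (u \<in> N a \<longleftrightarrow> v \<in> N x)"
    proof (cases "u \<in> N a")
      case True
      then show ?thesis using nbhd_of_nbr_a by simp
    next
      case False
      then have "u \<in> N x" using that V by blast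
      then show ?thesis using False twins that V disj by blast
    qed
    finally show ?thesis .
  qed
  then show ?thesis
    by (rule graph_iso_K33I[OF V disj card_nbhd[OF \<open>a \<in> V\<close>] card_nbhd[OF x]])
qed

lemma exists_splitting_nbhd:
  assumes "nbhd_connected U" "C \<subseteq> U" "C \<noteq> {}" "C \<noteq> U" "finite C"
  shows "\<exists>w. N w \<inter> C \<noteq> {} \<and> card C \<le> card (C - N w) + 2"
proof -
  obtain w where w: "N w \<inter> C \<noteq> {}" "N w \<inter> (U - C) \<noteq> {}"
    using assms unfolding nbhd_connected_def by blast
  then obtain u where u: "u \<in> N w" "u \<notin> C" by blast
  then have "card (C \<inter> N w) \<le> card (N w - {u})"
    using finite_nbhd by (intro card_mono) auto
  also have "\<dots> = 2"
    using u(1) card_nbhd[OF in_V_if_nbhd_nonempty[of w]] finite_nbhd by fastforce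
  finally show ?thesis using w(1) card_Int_Diff[OF assms(5), of "N w"] by auto
qed

context
  fixes U :: "'a set" and S0 :: "'a list"
  assumes U: "U \<subseteq> V" "nbhd_connected U"
    and S0: "legal_seq V E S0" "fresh_nbhds U S0"
begin

lemma extendable_peel:
  assumes "C \<subseteq> U" "N w \<inter> C \<noteq> {}" "extendable S0 (C - N w) k"
  shows "extendable S0 C (k + 2)"
proof -
  obtain v where v: "v \<in> N w" "v \<in> C" using assms(2) by blast
  then have "v \<in> U" "N w \<inter> (C - N w) = {}" using assms(1) by auto
  from extendable_snoc[OF assms(3) S0(2) this(1) v(1) this(2)]
  show ?thesis by (rule extendable_mono) (use v in auto)
qed

lemma extendable_twin_free_pair:
  assumes "twin_free U" "x \<in> U" "y \<in> U" "x \<noteq> y" "extendable S0 {y} k"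
  shows "extendable S0 {x, y} (k + 2)"
proof -
  have "N x \<noteq> N y" using assms(1-4) unfolding twin_free_def by blast
  then obtain z where "z \<in> N x" "z \<notin> N y"
    using exists_private_nbr[of x y] assms(2,3) U(1) by blast
  then have "x \<in> N z" "N z \<inter> {y} = {}" by (simp_all add: in_nbhd_sym[of z])
  from extendable_snoc[OF assms(5) S0(2) assms(2) this] show ?thesis .
qed

lemma extendable_proper_subset:
  assumes "C \<subseteq> U" "C \<noteq> U"
  shows "extendable S0 C (card C + (if twin_free U \<and> C \<noteq> {} then 1 else 0))"
  using assms
proof (induction "card C" arbitrary: C rule: less_induct)
  case less
  have "finite C" using less.prems(1) U(1) finite_V by (rule finite_subset[OF subset_trans])
  \<comment> \<open>a pair is split off separately, as one neighbourhood may contain both of its vertices\<close>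
  consider "C = {}" | "twin_free U" "card C = 2" | "C \<noteq> {}" "\<not> (twin_free U \<and> card C = 2)"
    by argo
  then show ?case
  proof cases
    case 1
    then show ?thesis using extendable_self[OF S0(1)] by simp
  next
    case 2
    then obtain x y where C: "C = {x, y}" "x \<noteq> y" by (meson card_2_iff)
    with less.prems(1) have xy: "x \<in> U" "y \<in> U" "{y} \<subseteq> U" "{y} \<noteq> U" by auto
    have "card {y} < card C" using 2(2) by simp
    from less.hyps[OF this xy(3,4)] 2(1) have "extendable S0 {y} (card {y} + 1)" by simp
    from extendable_twin_free_pair[OF 2(1) xy(1,2) C(2) this]
    have "extendable S0 C (card {y} + 1 + 2)" using C by simp
    moreover have "card C + (if twin_free U \<and> C \<noteq> {} then 1 else 0) \<le> card {y} + 1 + 2"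
      using 2 by simp
    ultimately show ?thesis by (rule extendable_mono[OF _ subset_refl])
  next
    case 3
    obtain w where w: "N w \<inter> C \<noteq> {}" "card C \<le> card (C - N w) + 2"
      using exists_splitting_nbhd[OF U(2) less.prems(1) 3(1) less.prems(2) \<open>finite C\<close>] by blast
    have "card (C - N w) < card C" using w(1) \<open>finite C\<close> by (intro psubset_card_mono) auto
    moreover have "C - N w \<subseteq> U" "C - N w \<noteq> U" using less.prems by auto
    ultimately have "extendable S0 (C - N w)
        (card (C - N w) + (if twin_free U \<and> C - N w \<noteq> {} then 1 else 0))"
      using less.hyps by blast
    from extendable_peel[OF less.prems(1) w(1) this]
    have "extendable S0 C (card (C - N w) + (if twin_free U \<and> C - N w \<noteq> {} then 1 else 0) + 2)" .
    moreover have "card C + (if twin_free U \<and> C \<noteq> {} then 1 else 0)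
        \<le> card (C - N w) + (if twin_free U \<and> C - N w \<noteq> {} then 1 else 0) + 2"
      using w(2) 3 by (cases "C - N w = {}") auto
    ultimately show ?thesis by (rule extendable_mono[OF _ subset_refl])
  qed
qed

lemma extendable_twin_free:
  assumes closed: "nbhd_closed U" and "U \<noteq> {}" and twin_free: "twin_free U"
  shows "extendable S0 U (card U)"
proof -
  obtain u where u: "u \<in> U" using assms(2) by blast
  then obtain w where w: "u \<in> N w"
    using U(1) nbhd_nonempty in_nbhd_sym by blast
  have w_V: "w \<in> V" using w in_V_if_nbhd_nonempty by blast
  have Nw_U: "N w \<subseteq> U" using closed w u unfolding nbhd_closed_def by blast
  define C where "C = U - N w"
  have C_ne: "C \<noteq> {}"
  proof
    assume "C = {}"
    then have U_eq: "U = N w" using Nw_U unfolding C_def by blast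
    have "N p \<subseteq> N q" if "p \<in> U" "q \<in> U" for p q
    proof
      fix z assume z: "z \<in> N p"
      then have "N z \<subseteq> N w" using closed that(1) in_nbhd_sym U_eq unfolding nbhd_closed_def by blast
      then have "N z = U" using nbhd_subset_imp_eq w_V z nbhd_subset U_eq by blast
      then show "z \<in> N q" using that(2) in_nbhd_sym by blast
    qed
    moreover have "card (U - {u}) = 2" using card_nbhd[OF w_V] U_eq u finite_nbhd by simp
    then have "U - {u} \<noteq> {}" by force
    then obtain q where "q \<in> U" "q \<noteq> u" by blast
    ultimately show False using twin_free u unfolding twin_free_def by blast
  qed
  have C_U: "C \<subseteq> U" "C \<noteq> U" using u w unfolding C_def by auto
  then have "extendable S0 C (card C + 1)"
    using extendable_proper_subset[OF C_U] twin_free C_ne by simp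
  moreover have "N w \<inter> C = {}" unfolding C_def by blast
  ultimately have "extendable S0 (insert u C) (card C + 1 + 2)"
    by (rule extendable_snoc[OF _ S0(2) u w])
  moreover have "insert u C \<subseteq> U" using u C_U by blast
  moreover have "card U \<le> card C + 1 + 2"
    using card_Diff_subset[OF finite_nbhd Nw_U] card_nbhd[OF w_V] unfolding C_def by simp
  ultimately show ?thesis by (rule extendable_mono)
qed

lemma extendable_twins:
  assumes closed: "nbhd_closed U"
    and twins: "x \<in> U" "y \<in> U" "x \<noteq> y" "N x = N y"
    and a: "a \<in> N x" and b: "b \<in> N x" "N b \<noteq> N a"
  shows "extendable S0 U (card U)"
proof -
  have a_V: "a \<in> V" and b_V: "b \<in> V" using a b nbhd_subset by blast+
  obtain b' where b': "b' \<in> N b" "b' \<notin> N a" using exists_private_nbr[OF b_V a_V b(2)] by blast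
  have xy_Na: "x \<in> N a" "y \<in> N a" using a twins(4) in_nbhd_sym by blast+
  have xy_Nb: "x \<in> N b" "y \<in> N b" using b(1) twins(4) in_nbhd_sym by blast+
  have "b' \<noteq> x" "b' \<noteq> y" using b'(2) xy_Na by auto
  then have "card {x, y, b'} = 3" using twins(3) by simp
  then have "N b = {x, y, b'}"
    using card_subset_eq[OF finite_nbhd, of "{x, y, b'}" b] card_nbhd[OF b_V] xy_Nb b'(1) by simp
  then have Nb_sub: "N b \<subseteq> insert b' (N a)" using xy_Na by simp
  have Na_U: "N a \<subseteq> U" and Nb_U: "N b \<subseteq> U"
    using closed twins(1) xy_Na(1) xy_Nb(1) unfolding nbhd_closed_def by blast+
  define C where "C = U - insert b' (N a)"
  have C_U: "C \<subseteq> U" "C \<noteq> U" using twins(1) xy_Na(1) unfolding C_def by auto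
  have "extendable S0 C (card C)"
    by (rule extendable_mono[OF extendable_proper_subset[OF C_U] subset_refl]) simp
  moreover have "b' \<in> U" "N b \<inter> C = {}" using b'(1) Nb_U Nb_sub unfolding C_def by blast+
  ultimately have "extendable S0 (insert b' C) (card C + 2)"
    using extendable_snoc[OF _ S0(2) _ b'(1)] by blast
  moreover have "N a \<inter> insert b' C = {}" using b'(2) unfolding C_def by blast
  ultimately have "extendable S0 (insert x (insert b' C)) (card C + 2 + 2)"
    by (rule extendable_snoc[OF _ S0(2) twins(1) xy_Na(1)])
  moreover have "insert x (insert b' C) \<subseteq> U" using twins(1) b'(1) Nb_U C_U(1) by blast
  moreover have "card U \<le> card C + 2 + 2"
  proof -
    have sub: "insert b' (N a) \<subseteq> U" using Na_U Nb_U b'(1) by blast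
    have "card (insert b' (N a)) = 4" using b'(2) finite_nbhd card_nbhd[OF a_V] by simp
    then show ?thesis
      using card_Diff_subset[OF _ sub] card_mono[OF _ sub] finite_subset[OF U(1) finite_V] finite_nbhd
      unfolding C_def by simp
  qed
  ultimately show ?thesis by (rule extendable_mono)
qed

lemma extendable_nbhd_closed:
  assumes conn: "connected_graph V E" and not_K33: "\<not> graph_iso V E K33_V K33_E"
    and closed: "nbhd_closed U" and "U \<noteq> {}"
  shows "extendable S0 U (card U)"
proof (cases "twin_free U")
  case True
  with extendable_twin_free closed \<open>U \<noteq> {}\<close> show ?thesis by blast
next
  case False
  then obtain x y where twins: "x \<in> U" "y \<in> U" "x \<noteq> y" "N x = N y"
    unfolding twin_free_def by blast
  then obtain a where a: "a \<in> N x" using U(1) nbhd_nonempty by blast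
  with graph_iso_K33_if_nbrs_twins[OF conn a] not_K33 obtain b where "b \<in> N x" "N b \<noteq> N a"
    by blast
  with extendable_twins[OF closed twins a] show ?thesis by blast
qed

end

lemma extendable_bipartition_side:
  assumes conn: "connected_graph V E" and not_K33: "\<not> graph_iso V E K33_V K33_E"
    and side: "bipartition_side B" "B \<noteq> {}" and S0: "legal_seq V E S0" "fresh_nbhds B S0"
  shows "extendable S0 B (card B)"
proof -
  have "B \<subseteq> V" using side(1) unfolding bipartition_side_def by blast
  from extendable_nbhd_closed[OF this nbhd_connected_if_bipartition_side[OF conn side(1)] S0
      conn not_K33 nbhd_closed_if_bipartition_side[OF side(1)] side(2)]
  show ?thesis .
qed

lemma exists_legal_seq_half:
  assumes conn: "connected_graph V E" and not_K33: "\<not> graph_iso V E K33_V K33_E"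
  shows "\<exists>S. legal_seq V E S \<and> card V \<le> 2 * length S"
proof -
  have empty: "legal_seq V E []" "fresh_nbhds U []" for U
    by (simp_all add: legal_seq_def fresh_nbhds_def)
  show ?thesis
  proof (cases "nbhd_connected V")
    case True
    have "nbhd_closed V" unfolding nbhd_closed_def using nbhd_subset by blast
    moreover have "V \<noteq> {}" using conn unfolding connected_graph_def by blast
    ultimately have "extendable [] V (card V)"
      using extendable_nbhd_closed[OF subset_refl True empty conn not_K33] by blast
    then show ?thesis unfolding extendable_def by auto
  next
    case False
    then obtain C where C: "bipartition_side C" "C \<noteq> {}" "C \<noteq> V"
      using bipartite_if_not_nbhd_connected conn by blast
    define D where "D = V - C"
    have C_V: "C \<subseteq> V" using C(1) unfolding bipartition_side_def by blast
    have D: "bipartition_side D" "D \<noteq> {}" "D \<subseteq> V"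
      using bipartition_side_Diff[OF C(1)] C_V C(3) unfolding D_def by auto
    obtain S1 where S1: "legal_seq V E S1" "set S1 \<subseteq> D" "card D \<le> 2 * length S1"
      using extendable_bipartition_side[OF conn not_K33 D(1,2) empty] unfolding extendable_def by auto
    have "fresh_nbhds C S1"
      using nbhd_closed_if_bipartition_side[OF C(1)] S1(2)
      unfolding fresh_nbhds_def nbhd_closed_def D_def by blast
    then obtain S where S: "legal_seq V E S" "2 * length S1 + card C \<le> 2 * length S"
      using extendable_bipartition_side[OF conn not_K33 C(1,2) S1(1)] unfolding extendable_def by auto
    have "card V = card C + card D"
      using card_Diff_subset[OF finite_subset[OF C_V finite_V] C_V] card_mono[OF finite_V C_V]
      unfolding D_def by simp
    with S S1(3) show ?thesis by (intro exI[of _ S]) simp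
  qed
qed

end

theorem mainTheorem15:
  fixes V :: "'a set" and E :: "'a \<Rightarrow> 'a \<Rightarrow> bool"
  assumes "simple_graph V E"
    and "connected_graph V E"
    and "cubic V E"
    and "\<not> graph_iso V E K33_V K33_E"
  shows "2 * gamma_gr_t V E \<ge> card V"
proof -
  interpret cubic_graph V E
    using assms(1,3) by unfold_locales
  obtain S where "legal_seq V E S" "card V \<le> 2 * length S"
    using exists_legal_seq_half[OF assms(2,4)] by blast
  moreover have "length S \<le> gamma_gr_t V E"
    using legal_seq_length_le_gamma_gr_t[OF \<open>legal_seq V E S\<close> nbhd_nonempty] .
  ultimately show ?thesis by linarith
qed

end
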